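(* Let $G$ be a group with finite generating set $S$. Then $G$ is a torsion group if and only if the skeleton subshift $X_{G,S}$ is aperiodic.
   Context: A group is torsion if every element has finite order. The skeleton subshift $X_{G,S}\subseteq(S\cup S^{-1})^{\mathbb{Z}}$ is the set of bi-infinite sequences none of whose non-empty finite factors $x_ix_{i+1}\cdots x_j$ represents $1_G$. With the shift $\sigma(x)_i=x_{i+1}$, a sequence $x$ is periodic if $\sigma^k(x)=x$ for some $k\neq0$; a set of sequences is aperiodic if it contains no periodic sequence. *)

theory Defs
  imports "HOL-Algebra.Generated_Groups"
begin

definition torsion_group :: "('a, 'b) monoid_scheme \<Rightarrow> bool" where
  "torsion_group G \<longleftrightarrow> (\<forall>g \<in> carrier G. \<exists>n::nat. n > 0 \<and> g [^]\<^bsub>G\<^esub> n = \<one>\<^bsub>G\<^esub>)"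

definition word_prod :: "('a, 'b) monoid_scheme \<Rightarrow> 'a list \<Rightarrow> 'a" where
  "word_prod G w = foldr (\<lambda>a b. a \<otimes>\<^bsub>G\<^esub> b) w \<one>\<^bsub>G\<^esub>"

definition skeleton :: "('a, 'b) monoid_scheme \<Rightarrow> 'a set \<Rightarrow> (int \<Rightarrow> 'a) set" where
  "skeleton G S = {x. (\<forall>i. x i \<in> S \<union> (\<lambda>s. inv\<^bsub>G\<^esub> s) ` S) \<and>
      (\<forall>i j. i \<le> j \<longrightarrow> word_prod G (map x [i..j]) \<noteq> \<one>\<^bsub>G\<^esub>)}"

definition shift :: "int \<Rightarrow> (int \<Rightarrow> 'a) \<Rightarrow> (int \<Rightarrow> 'a)" where
  "shift k x = (\<lambda>i. x (i + k))"

definition periodic :: "(int \<Rightarrow> 'a) \<Rightarrow> bool" where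
  "periodic x \<longleftrightarrow> (\<exists>k. k \<noteq> 0 \<and> shift k x = x)"

definition aperiodic :: "(int \<Rightarrow> 'a) set \<Rightarrow> bool" where
  "aperiodic X \<longleftrightarrow> (\<forall>x \<in> X. \<not> periodic x)"

end

theory Submission
  imports Defs "HOL-Algebra.Multiplicative_Group"
begin

text \<open>If G is torsion and x is periodic with period K, then ord g consecutive periods of x,
  where g is the product of one period, form a factor representing g to the power ord g, i.e. 1.

  Conversely, if some element has infinite order, take a shortest word w over S and the inverses
  of its elements whose product has infinite order, and repeat it periodically. A factor of this
  sequence is u^q followed by the prefix of length r < |w| of u, for a rotation u of w; u is
  again a shortest such word, since its product is a conjugate of that of w. If this factor
  represented 1, then either r = 0 and the product of u has finite order, or r > 0 and the
  (q+1)-st power of the product of u equals the product of the suffix of u after position r,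
  a shorter word whose product would then have infinite order.\<close>

lemma word_prod_Nil [simp]: "word_prod G [] = \<one>\<^bsub>G\<^esub>"
  by (simp add: word_prod_def)

lemma word_prod_Cons [simp]: "word_prod G (a # w) = a \<otimes>\<^bsub>G\<^esub> word_prod G w"
  by (simp add: word_prod_def)

lemma map_upto_eq_map_upt:
  "i \<le> j \<Longrightarrow> map x [i..j] = map (\<lambda>k. x (i + int k)) [0..<nat (j - i + 1)]"
  by (rule nth_equalityI) (auto simp: nth_upto)

lemma map_upt_periodic:
  assumes "\<And>k. f (k + n) = f k"
  shows "map f [0..<q * n + r] = concat (replicate q (map f [0..<n])) @ map f [0..<r]"
proof (induction q)
  case (Suc q)
  have "[0..<Suc q * n + r] = [0..<n] @ [n..<q * n + r + n]"
    by (simp add: upt_add_eq_append[symmetric] algebra_simps)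
  moreover have "map f [n..<q * n + r + n] = map f [0..<q * n + r]"
    by (simp flip: map_add_upt add: comp_def assms)
  ultimately show ?case
    using Suc.IH by simp
qed simp

lemma map_nth_mod_upt:
  assumes "u \<noteq> []"
  shows "map (\<lambda>k. u ! (k mod length u)) [0..<m]
    = concat (replicate (m div length u) u) @ take (m mod length u) u"
proof -
  let ?n = "length u"
  have "map (\<lambda>k. u ! (k mod ?n)) [0..<m] = map (\<lambda>k. u ! (k mod ?n)) [0..<m div ?n * ?n + m mod ?n]"
    by simp
  also have "\<dots> = concat (replicate (m div ?n) (map (\<lambda>k. u ! (k mod ?n)) [0..<?n]))
      @ map (\<lambda>k. u ! (k mod ?n)) [0..<m mod ?n]"
    by (rule map_upt_periodic) simp
  also have "map (\<lambda>k. u ! (k mod ?n)) [0..<?n] = u"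
    by (rule nth_equalityI) auto
  also have "map (\<lambda>k. u ! (k mod ?n)) [0..<m mod ?n] = take (m mod ?n) u"
  proof -
    have "m mod ?n < ?n"
      using assms by simp
    then show ?thesis
      by (intro nth_equalityI) auto
  qed
  finally show ?thesis .
qed

lemma skeletonD:
  assumes "x \<in> skeleton G S"
  shows "x i \<in> S \<union> (\<lambda>s. inv\<^bsub>G\<^esub> s) ` S"
    and "i \<le> j \<Longrightarrow> word_prod G (map x [i..j]) \<noteq> \<one>\<^bsub>G\<^esub>"
  using assms unfolding skeleton_def by blast+

definition periodic_extension :: "'a list \<Rightarrow> int \<Rightarrow> 'a" where
  "periodic_extension w i = w ! nat (i mod int (length w))"

lemma periodic_extension_in_set:
  "w \<noteq> [] \<Longrightarrow> periodic_extension w i \<in> set w"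
  by (simp add: periodic_extension_def nat_less_iff)

lemma periodic_periodic_extension:
  "w \<noteq> [] \<Longrightarrow> periodic (periodic_extension w)"
  unfolding periodic_def shift_def periodic_extension_def
  by (intro exI[of _ "int (length w)"]) auto

lemma periodic_extension_add:
  assumes "w \<noteq> []"
  shows "periodic_extension w (i + int k)
    = rotate (nat (i mod int (length w))) w ! (k mod length w)"
proof -
  let ?n = "length w"
  have "int ((nat (i mod int ?n) + k mod ?n) mod ?n) = (i + int k) mod int ?n"
    using assms by (simp add: of_nat_mod mod_add_eq)
  then have "nat ((i + int k) mod int ?n) = (nat (i mod int ?n) + k mod ?n) mod ?n"
    by (metis nat_int)
  then show ?thesis
    using assms by (simp add: periodic_extension_def nth_rotate)
qed

lemma map_periodic_extension_upto:
  assumes "w \<noteq> []" "i \<le> j"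
  defines "u \<equiv> rotate (nat (i mod int (length w))) w" and "m \<equiv> nat (j - i + 1)"
  shows "map (periodic_extension w) [i..j]
    = concat (replicate (m div length w) u) @ take (m mod length w) u"
proof -
  have "length u = length w" "u \<noteq> []"
    using assms(1) by (simp_all add: u_def)
  moreover have "map (periodic_extension w) [i..j] = map (\<lambda>k. u ! (k mod length u)) [0..<m]"
    using assms by (simp add: map_upto_eq_map_upt periodic_extension_add)
  ultimately show ?thesis
    using map_nth_mod_upt[of u m] by simp
qed

lemma periodic_obtain_positive_period:
  assumes "periodic x"
  obtains K :: nat where "K > 0" "\<And>i. x (i + int K) = x i"
proof -
  obtain k where "k \<noteq> 0" and k: "\<And>i. x (i + k) = x i"
    using assms unfolding periodic_def shift_def by metis
  moreover have "x (i + \<bar>k\<bar>) = x i" for i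
    using k[of i] k[of "i - k"] by (cases "k \<ge> 0") auto
  ultimately show ?thesis
    using that[of "nat \<bar>k\<bar>"] by simp
qed

lemma (in monoid) nat_pow_mult_swap:
  assumes "a \<in> carrier G" "b \<in> carrier G"
  shows "(b \<otimes> a) [^] (m::nat) \<otimes> b = b \<otimes> (a \<otimes> b) [^] m"
proof (induction m)
  case (Suc m)
  have "(b \<otimes> a) [^] Suc m \<otimes> b = ((b \<otimes> a) [^] m \<otimes> b) \<otimes> (a \<otimes> b)"
    using assms by (simp add: m_assoc)
  also have "\<dots> = b \<otimes> (a \<otimes> b) [^] Suc m"
    using Suc.IH assms by (simp add: m_assoc)
  finally show ?case .
qed (use assms in simp)

context group
begin

lemma torsion_group_iff_ord: "torsion_group G \<longleftrightarrow> (\<forall>g \<in> carrier G. ord g \<noteq> 0)"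
  by (auto simp: torsion_group_def ord_eq_0)

lemma ord_mult_swap:
  assumes "a \<in> carrier G" "b \<in> carrier G"
  shows "ord (b \<otimes> a) = ord (a \<otimes> b)"
proof -
  have "(b \<otimes> a) [^] m = \<one> \<longleftrightarrow> (a \<otimes> b) [^] m = \<one>" for m :: nat
    using nat_pow_mult_swap[OF assms, of m] assms
    by (metis l_cancel_one m_closed nat_pow_closed r_cancel_one)
  then show ?thesis
    using assms by (simp add: ord_unique pow_eq_id)
qed

lemma word_prod_closed [simp]: "set w \<subseteq> carrier G \<Longrightarrow> word_prod G w \<in> carrier G"
  by (induction w) auto

lemma word_prod_append:
  "set u \<subseteq> carrier G \<Longrightarrow> set v \<subseteq> carrier G \<Longrightarrow>
    word_prod G (u @ v) = word_prod G u \<otimes> word_prod G v"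
  by (induction u) (auto simp: m_assoc)

lemma word_prod_concat_replicate:
  assumes "set w \<subseteq> carrier G"
  shows "word_prod G (concat (replicate q w)) = word_prod G w [^] q"
proof (induction q)
  case (Suc q)
  have "set (concat (replicate q w)) \<subseteq> carrier G"
    using assms by auto
  then show ?case
    using Suc.IH assms by (simp add: word_prod_append flip: nat_pow_Suc2)
qed simp

lemma generate_imp_word_prod:
  assumes "S \<subseteq> carrier G" "h \<in> generate G S"
  shows "\<exists>w. set w \<subseteq> S \<union> (\<lambda>s. inv s) ` S \<and> word_prod G w = h"
  using assms(2)
proof (induction rule: generate.induct)
  case one
  show ?case by (intro exI[of _ "[]"]) simp
next
  case (incl h)
  then show ?case using assms(1) by (intro exI[of _ "[h]"]) auto
next
  case (inv h)
  then show ?case using assms(1) by (intro exI[of _ "[inv h]"]) auto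
next
  case (eng h1 h2)
  then obtain w1 w2 where w1: "set w1 \<subseteq> S \<union> (\<lambda>s. inv s) ` S" "word_prod G w1 = h1"
      and w2: "set w2 \<subseteq> S \<union> (\<lambda>s. inv s) ` S" "word_prod G w2 = h2"
    by blast
  have "S \<union> (\<lambda>s. inv s) ` S \<subseteq> carrier G"
    using assms(1) by auto
  then have "set w1 \<subseteq> carrier G" "set w2 \<subseteq> carrier G"
    using w1(1) w2(1) by blast+
  then show ?case
    using w1 w2 by (intro exI[of _ "w1 @ w2"]) (simp add: word_prod_append)
qed

lemma ord_word_prod_rotate:
  assumes "set w \<subseteq> carrier G"
  shows "ord (word_prod G (rotate s w)) = ord (word_prod G w)"
proof -
  let ?k = "s mod length w"
  have take: "set (take ?k w) \<subseteq> carrier G" and drop: "set (drop ?k w) \<subseteq> carrier G"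
    using assms by (meson order_trans set_take_subset set_drop_subset)+
  have "ord (word_prod G (rotate s w)) = ord (word_prod G (drop ?k w) \<otimes> word_prod G (take ?k w))"
    by (simp add: rotate_drop_take word_prod_append[OF drop take])
  also have "\<dots> = ord (word_prod G (take ?k w) \<otimes> word_prod G (drop ?k w))"
    using take drop by (simp add: ord_mult_swap)
  also have "\<dots> = ord (word_prod G w)"
    by (simp flip: word_prod_append[OF take drop])
  finally show ?thesis .
qed

lemma word_prod_power_prefix_neq_one:
  assumes T: "T \<subseteq> carrier G" and u: "set u \<subseteq> T" "ord (word_prod G u) = 0"
    and shortest: "\<And>v. set v \<subseteq> T \<Longrightarrow> length v < length u \<Longrightarrow> ord (word_prod G v) \<noteq> 0"
    and r: "r < length u" and qr: "0 < q \<or> 0 < r"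
  shows "word_prod G (concat (replicate q u) @ take r u) \<noteq> \<one>"
proof
  assume one: "word_prod G (concat (replicate q u) @ take r u) = \<one>"
  define g a b where "g = word_prod G u" and "a = word_prod G (take r u)"
    and "b = word_prod G (drop r u)"
  have uC: "set u \<subseteq> carrier G"
    using T u(1) by blast
  then have takeC: "set (take r u) \<subseteq> carrier G" and dropC: "set (drop r u) \<subseteq> carrier G"
    by (meson order_trans set_take_subset set_drop_subset)+
  then have carrier: "g \<in> carrier G" "a \<in> carrier G" "b \<in> carrier G"
    using uC by (simp_all add: g_def a_def b_def)
  have g_ab: "g = a \<otimes> b"
    using word_prod_append[OF takeC dropC] by (simp add: g_def a_def b_def)
  have "set (concat (replicate q u)) \<subseteq> carrier G"
    using uC by auto
  then have ga: "g [^] q \<otimes> a = \<one>"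
    using one uC takeC by (simp add: word_prod_append word_prod_concat_replicate g_def a_def)
  show False
  proof (cases "r = 0")
    case True
    then have "g [^] q = \<one>"
      using ga carrier by (simp add: a_def)
    then show False
      using True qr u(2) carrier by (simp add: g_def ord_eq_0)
  next
    case False
    have "g [^] Suc q = (g [^] q \<otimes> a) \<otimes> b"
      using carrier g_ab by (simp add: m_assoc)
    also have "\<dots> = b"
      using ga carrier by simp
    finally have "ord b = 0"
      using u(2) carrier by (metis g_def ord_pow_gen div_0 nat.distinct(1))
    moreover have "set (drop r u) \<subseteq> T"
      using u(1) by (meson order_trans set_drop_subset)
    ultimately show False
      using shortest[of "drop r u"] False r by (simp add: b_def)
  qed
qed

lemma periodic_point_in_skeleton_if_infinite_order:
  assumes S: "S \<subseteq> carrier G" and g: "g \<in> generate G S" "ord g = 0"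
  shows "\<exists>x \<in> skeleton G S. periodic x"
proof -
  define T where "T = S \<union> (\<lambda>s. inv s) ` S"
  have T: "T \<subseteq> carrier G"
    using S by (auto simp: T_def)
  obtain w0 where "set w0 \<subseteq> T" "ord (word_prod G w0) = 0"
    using generate_imp_word_prod[OF S g(1)] g(2) by (auto simp: T_def)
  then obtain w where w: "set w \<subseteq> T" "ord (word_prod G w) = 0"
    and shortest: "\<And>v. set v \<subseteq> T \<Longrightarrow> ord (word_prod G v) = 0 \<Longrightarrow> length w \<le> length v"
    using ex_has_least_nat[of "\<lambda>v. set v \<subseteq> T \<and> ord (word_prod G v) = 0" w0 length] by blast
  have "w \<noteq> []"
    using w(2) by auto
  let ?x = "periodic_extension w"
  have "?x \<in> skeleton G S"
    unfolding skeleton_def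
  proof (intro CollectI conjI allI impI)
    show "?x i \<in> S \<union> (\<lambda>s. inv s) ` S" for i
      using periodic_extension_in_set[OF \<open>w \<noteq> []\<close>] w(1) by (auto simp: T_def)
  next
    fix i j :: int
    assume "i \<le> j"
    define u where "u = rotate (nat (i mod int (length w))) w"
    define m where "m = nat (j - i + 1)"
    have "map ?x [i..j] = concat (replicate (m div length u) u) @ take (m mod length u) u"
      using map_periodic_extension_upto[OF \<open>w \<noteq> []\<close> \<open>i \<le> j\<close>] by (simp add: u_def m_def)
    moreover have "word_prod G (concat (replicate (m div length u) u) @ take (m mod length u) u) \<noteq> \<one>"
    proof (rule word_prod_power_prefix_neq_one[OF T])
      show "set u \<subseteq> T"
        using w(1) by (simp add: u_def)
      show "ord (word_prod G u) = 0"
        using w T by (simp add: u_def ord_word_prod_rotate)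
      show "ord (word_prod G v) \<noteq> 0" if "set v \<subseteq> T" "length v < length u" for v
        using shortest[OF that(1)] that(2) by (force simp: u_def)
      show "m mod length u < length u"
        using \<open>w \<noteq> []\<close> by (simp add: u_def)
      have "m > 0"
        using \<open>i \<le> j\<close> by (simp add: m_def)
      then show "0 < m div length u \<or> 0 < m mod length u"
        by (metis div_mult_mod_eq add_0 mult_0 neq0_conv)
    qed
    ultimately show "word_prod G (map ?x [i..j]) \<noteq> \<one>"
      by simp
  qed
  then show ?thesis
    using periodic_periodic_extension[OF \<open>w \<noteq> []\<close>] by blast
qed

lemma aperiodic_skeleton_if_torsion:
  assumes torsion: "torsion_group G" and S: "S \<subseteq> carrier G"
  shows "aperiodic (skeleton G S)"
  unfolding aperiodic_def
proof (intro ballI notI)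
  fix x
  assume x: "x \<in> skeleton G S" and "periodic x"
  from \<open>periodic x\<close> obtain K where "K > 0" and K: "\<And>i. x (i + int K) = x i"
    by (rule periodic_obtain_positive_period) blast
  define f where "f k = x (int k)" for k
  define g where "g = word_prod G (map f [0..<K])"
  have "x i \<in> carrier G" for i
    using skeletonD(1)[OF x, of i] S by auto
  then have fC: "set (map f [0..<K]) \<subseteq> carrier G"
    by (auto simp: f_def)
  define d where "d = ord g"
  have "d > 0"
    using torsion fC by (simp add: torsion_group_iff_ord g_def d_def)
  then have "d * K > 0"
    using \<open>K > 0\<close> by simp
  then have "map x [0..int (d * K) - 1] = map f [0..<d * K + 0]"
    by (simp add: map_upto_eq_map_upt f_def[abs_def] flip: of_nat_mult)
  also have "\<dots> = concat (replicate d (map f [0..<K])) @ map f [0..<0]"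
    by (rule map_upt_periodic) (simp add: f_def K)
  finally have "word_prod G (map x [0..int (d * K) - 1]) = g [^] d"
    using word_prod_concat_replicate[OF fC] by (simp add: g_def)
  also have "\<dots> = \<one>"
    using fC by (simp add: g_def d_def)
  finally show False
    using skeletonD(2)[OF x, of 0 "int (d * K) - 1"] \<open>d * K > 0\<close> by simp
qed

end

theorem proposition9:
  fixes G (structure) and S :: "'a set"
  assumes "group G" and "S \<subseteq> carrier G" and "finite S"
    and "generate G S = carrier G"
  shows "torsion_group G \<longleftrightarrow> aperiodic (skeleton G S)"
proof -
  interpret group G by fact
  show ?thesis
  proof
    assume "torsion_group G"
    then show "aperiodic (skeleton G S)"
      using assms(2) by (rule aperiodic_skeleton_if_torsion)
  next
    assume "aperiodic (skeleton G S)"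
    then show "torsion_group G"
      using periodic_point_in_skeleton_if_infinite_order[OF assms(2)] assms(4)
      by (auto simp: torsion_group_iff_ord aperiodic_def)
  qed
qed

end
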